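(* Let $\epsilon>0$, $L=3/2-\epsilon$, and let $E\subset[0,L]$ be a measurable set with Lebesgue measure $m(E)=1$ such that $\sup E=\operatorname{ess\,sup}E$ and $\inf E=\operatorname{ess\,inf}E$. Suppose $E$ weakly tiles its complement with respect to a locally finite measure $\mu$ on $\mathbb{R}$, i.e. $\chi_E*\mu=\chi_{\mathbb{R}\setminus E}$ almost everywhere. Then $\mu=\sum_{k\in\mathbb{Z}\setminus\{0\}}\delta_k$.
   Context: Here $\mu$ is a positive, locally finite Borel measure on $\mathbb{R}$, $\chi_A$ denotes the indicator function of a set $A$, $(\chi_E*\mu)(x)=\int\chi_E(x-y)\,d\mu(y)=\mu(x-E)$, and $\delta_k$ is the Dirac mass at $k$. A set $E$ is said to weakly tile its complement with respect to $\mu$ if $\chi_E*\mu=\chi_{\mathbb{R}\setminus E}$ Lebesgue-almost everywhere. *)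

theory Defs
  imports "HOL-Analysis.Analysis"
begin

definition ess_sup_set :: "real set \<Rightarrow> real" where
  "ess_sup_set E = Inf {t. E \<inter> {t<..} \<in> null_sets lebesgue}"

definition ess_inf_set :: "real set \<Rightarrow> real" where
  "ess_inf_set E = Sup {t. E \<inter> {..<t} \<in> null_sets lebesgue}"

definition locally_finite_borel :: "real measure \<Rightarrow> bool" where
  "locally_finite_borel M \<longleftrightarrow> sets M = sets borel \<and>
     (\<forall>K. compact K \<longrightarrow> emeasure M K < \<infinity>)"

text \<open>Convolution (chi_E * mu)(x) = integral of chi_E(x - y) d mu(y)
  (integral w.r.t. the completion of mu, since E is only Lebesgue measurable).\<close>
definition conv_ind :: "real set \<Rightarrow> real measure \<Rightarrow> real \<Rightarrow> ennreal" where
  "conv_ind E M x = (\<integral>\<^sup>+ y. indicator E (x - y) \<partial>completion M)"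

definition weakly_tiles_complement :: "real set \<Rightarrow> real measure \<Rightarrow> bool" where
  "weakly_tiles_complement E M \<longleftrightarrow>
     (AE x in lebesgue. conv_ind E M x = indicator (UNIV - E) x)"

definition nonzero_integer_diracs :: "real measure" where
  "nonzero_integer_diracs = distr (count_space (UNIV - {0::int})) borel real_of_int"

end

theory Submission
  imports Defs
begin

text \<open>
  Replace \<open>E\<close> by a Borel set of the same measure and translate it to a tile \<open>B \<subseteq> [0, d]\<close>,
  \<open>d < 3/2\<close>, with positive mass next to both endpoints. Adding a unit mass at \<open>0\<close> turns
  \<open>\<chi>\<^sub>B * \<mu> = 1 - \<chi>\<^sub>B\<close> into a genuine tiling \<open>\<chi>\<^sub>B * \<nu> = 1\<close> with \<open>\<nu> = \<mu> + \<delta>\<^sub>0\<close>.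
  If \<open>\<nu>{c} \<ge> 1\<close>, Fubini gives \<open>\<integral> |(B + c) \<inter> (B + y)| d\<nu>(y) = |B + c| = 1\<close>, so \<open>\<nu>{c} = 1\<close> and
  \<open>\<nu>\<close>-almost no \<open>y \<noteq> c\<close> has \<open>B + y\<close> overlapping \<open>B + c\<close>. As \<open>|B| = 1\<close> and \<open>d < 3/2\<close>, translates
  at distance less than \<open>1\<close> do overlap, so \<open>\<nu>\<close> has no mass in \<open>(c - 1, c + 1)\<close> besides the atom.
  Starting from the atom at \<open>0\<close>, the left end \<open>s\<close> of the support of \<open>\<nu>\<close> in \<open>(0, \<infinity>)\<close> is again such
  an atom, and covering \<open>(d - 1, s + 1)\<close> by \<open>B\<close> and \<open>B + s\<close> forces \<open>s = 1\<close>. Translating and reflecting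
  the tile gives \<open>\<nu> = \<Sum>\<^sub>k \<delta>\<^sub>k\<close>.
\<close>

section \<open>Measures on the real line\<close>

lemma emeasure_lborel_translate:
  fixes t :: real
  assumes "B \<in> sets borel"
  shows "emeasure lborel {x. x + t \<in> B} = emeasure lborel B"
proof -
  have "emeasure lborel B = emeasure (distr lborel borel ((+) t)) B"
    by (simp add: lborel_distr_plus)
  also have "\<dots> = emeasure lborel ((+) t -` B)"
    using assms by (subst emeasure_distr) auto
  finally show ?thesis
    by (simp add: vimage_def add.commute)
qed

lemma emeasure_lborel_reflect:
  fixes t :: real
  assumes "B \<in> sets borel"
  shows "emeasure lborel {x. t - x \<in> B} = emeasure lborel B"
proof -
  have "{x. t - x \<in> B} = uminus -` {x. x + t \<in> B}"
    by auto
  also have "emeasure lborel \<dots> = emeasure (distr lborel borel uminus) {x. x + t \<in> B}"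
    using assms by (subst emeasure_distr) auto
  finally show ?thesis
    using emeasure_lborel_translate[OF assms] by (simp add: lborel_distr_uminus)
qed

lemma AE_lborel_translate:
  fixes c :: real
  assumes "AE x in lborel. P x"
  shows "AE x in lborel. P (x + c)"
proof -
  have "AE x in distr lborel borel ((+) c). P x"
    by (subst lborel_distr_plus) (rule assms)
  from AE_distrD[OF _ this] show ?thesis
    by (simp add: add.commute)
qed

lemma AE_lborel_reflect:
  fixes c :: real
  assumes "AE x in lborel. P x"
  shows "AE x in lborel. P (c - x)"
proof -
  have "AE x in distr lborel borel uminus. P (x + c)"
    by (subst lborel_distr_uminus) (rule AE_lborel_translate[OF assms])
  from AE_distrD[OF _ this] show ?thesis
    by simp
qed

lemma AE_lborel_bexI:
  assumes "AE x in lborel. P x" and "S \<in> sets borel" and "emeasure lborel S > 0"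
  shows "\<exists>x\<in>S. P x"
proof (rule ccontr)
  assume "\<not> (\<exists>x\<in>S. P x)"
  then have "AE x in lborel. x \<notin> S"
    using assms(1) by auto
  then have "emeasure lborel S = 0"
    using assms(2) by (simp add: AE_iff_measurable[OF _ refl])
  with assms(3) show False
    by simp
qed

lemma locally_finite_borel_Icc:
  "locally_finite_borel \<nu> \<Longrightarrow> emeasure \<nu> {a..b} < \<infinity>"
  unfolding locally_finite_borel_def by (simp add: compact_Icc)

lemma locally_finite_borel_sets:
  "locally_finite_borel \<nu> \<Longrightarrow> sets \<nu> = sets borel"
  unfolding locally_finite_borel_def by simp

lemma locally_finite_borel_space:
  "locally_finite_borel \<nu> \<Longrightarrow> space \<nu> = UNIV"
  by (metis locally_finite_borel_sets sets_eq_imp_space_eq space_borel)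

lemma locally_finite_borel_sigma_finite:
  assumes \<nu>: "locally_finite_borel \<nu>"
  shows "sigma_finite_measure \<nu>"
proof
  let ?A = "range (\<lambda>n::nat. {-real n..real n})"
  have "\<Union> ?A = UNIV"
  proof safe
    fix x :: real
    obtain n :: nat where "\<bar>x\<bar> \<le> real n"
      using real_arch_simple by blast
    then show "x \<in> \<Union> ?A"
      by (auto intro!: exI[of _ n])
  qed auto
  moreover have "?A \<subseteq> sets \<nu>" "\<forall>a\<in>?A. emeasure \<nu> a \<noteq> \<infinity>"
    using locally_finite_borel_Icc[OF \<nu>] by (auto simp: locally_finite_borel_sets[OF \<nu>] less_top)
  ultimately show "\<exists>A. countable A \<and> A \<subseteq> sets \<nu> \<and> \<Union> A = space \<nu> \<and> (\<forall>a\<in>A. emeasure \<nu> a \<noteq> \<infinity>)"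
    by (intro exI[of _ ?A]) (simp add: locally_finite_borel_space[OF \<nu>])
qed

lemma emeasure_distr_borel:
  fixes f :: "'a::topological_space \<Rightarrow> 'b::topological_space"
  assumes "sets \<nu> = sets borel" and "f \<in> borel_measurable borel" and "A \<in> sets borel"
  shows "emeasure (distr \<nu> borel f) A = emeasure \<nu> (f -` A)"
proof -
  have "f \<in> measurable \<nu> borel"
    using assms(2) by (simp add: measurable_cong_sets[OF assms(1) refl])
  from emeasure_distr[OF this assms(3)] show ?thesis
    using sets_eq_imp_space_eq[OF assms(1)] by simp
qed

lemma locally_finite_borel_distr:
  fixes f :: "real \<Rightarrow> real"
  assumes \<nu>: "locally_finite_borel \<nu>" and f: "f \<in> borel_measurable borel"
    and proper: "\<And>K. compact K \<Longrightarrow> compact (f -` K)"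
  shows "locally_finite_borel (distr \<nu> borel f)"
  unfolding locally_finite_borel_def
proof (intro conjI allI impI)
  fix K :: "real set"
  assume K: "compact K"
  then have "emeasure (distr \<nu> borel f) K = emeasure \<nu> (f -` K)"
    by (intro emeasure_distr_borel[OF locally_finite_borel_sets[OF \<nu>] f])
       (simp add: compact_imp_closed borel_closed)
  also have "\<dots> < \<infinity>"
    using \<nu> proper[OF K] by (simp add: locally_finite_borel_def)
  finally show "emeasure (distr \<nu> borel f) K < \<infinity>" .
qed simp

lemma INT_atLeastAtMost_inverse_Suc:
  fixes s :: real
  shows "(\<Inter>n. {s..s + 1 / (1 + real n)}) = {s}"
proof safe
  fix x
  assume x: "x \<in> (\<Inter>n. {s..s + 1 / (1 + real n)})"
  show "x = s"
  proof (rule ccontr)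
    assume "x \<noteq> s"
    with x have "0 < x - s"
      by force
    then obtain n where "inverse (real (Suc n)) < x - s"
      using reals_Archimedean by blast
    moreover have "x \<le> s + 1 / (1 + real n)"
      using x by (simp add: Inter_iff)
    ultimately show False
      by (simp add: inverse_eq_divide)
  qed
qed auto

lemma UN_greaterThanLessThan_inverse_Suc:
  fixes a s :: real
  shows "(\<Union>n. {a<..<s - 1 / (1 + real n)}) = {a<..<s}"
proof safe
  fix x
  assume "x \<in> {a<..<s}"
  then obtain n where "inverse (real (Suc n)) < s - x"
    using reals_Archimedean[of "s - x"] by auto
  with \<open>x \<in> {a<..<s}\<close> show "x \<in> (\<Union>n. {a<..<s - 1 / (1 + real n)})"
    by (auto simp: field_simps)
next
  fix x n
  assume "x \<in> {a<..<s - 1 / (1 + real n)}"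
  moreover have "s - 1 / (1 + real n) < s"
    by simp
  ultimately show "x \<in> {a<..<s}"
    by (meson greaterThanLessThan_iff less_trans)
qed

lemma le_emeasure_singleton:
  fixes s :: real
  assumes \<nu>: "locally_finite_borel \<nu>" and le: "\<And>n. c \<le> emeasure \<nu> {s..s + 1 / (1 + real n)}"
  shows "c \<le> emeasure \<nu> {s}"
proof -
  have "(INF n. emeasure \<nu> {s..s + 1 / (1 + real n)}) = emeasure \<nu> (\<Inter>n. {s..s + 1 / (1 + real n)})"
  proof (rule INF_emeasure_decseq')
    show "decseq (\<lambda>n. {s..s + 1 / (1 + real n)})"
      by (intro decseq_SucI) (simp add: frac_le)
  qed (use locally_finite_borel_Icc[OF \<nu>] in \<open>auto simp: locally_finite_borel_sets[OF \<nu>] less_top\<close>)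
  then have "emeasure \<nu> {s} = (INF n. emeasure \<nu> {s..s + 1 / (1 + real n)})"
    by (simp add: INT_atLeastAtMost_inverse_Suc)
  with le show ?thesis
    by (simp add: le_INF_iff)
qed

lemma obtain_support_start:
  fixes a b d :: real
  assumes sets: "sets \<nu> = sets borel" and "emeasure \<nu> {a<..<b} = 0"
    and "\<And>u. emeasure \<nu> {a<..<u} = 0 \<Longrightarrow> u \<le> d"
  obtains s where "b \<le> s" and "emeasure \<nu> {a<..<s} = 0"
    and "\<And>\<eta>. 0 < \<eta> \<Longrightarrow> emeasure \<nu> {s..<s + \<eta>} > 0"
proof
  define Z where "Z = {u. emeasure \<nu> {a<..<u} = 0}"
  define s where "s = Sup Z"
  have "b \<in> Z" and bdd: "bdd_above Z"
    using assms by (auto simp: Z_def bdd_above_def)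
  then show "b \<le> s"
    unfolding s_def by (rule cSup_upper)
  have "emeasure \<nu> {a<..<s - 1 / (1 + real n)} = 0" for n
  proof -
    obtain u where "u \<in> Z" "s - 1 / (1 + real n) < u"
      using less_cSup_iff[OF _ bdd, of "s - 1 / (1 + real n)"] \<open>b \<in> Z\<close> by (auto simp: s_def)
    then have "emeasure \<nu> {a<..<s - 1 / (1 + real n)} \<le> emeasure \<nu> {a<..<u}"
      by (intro emeasure_mono) (auto simp: sets)
    with \<open>u \<in> Z\<close> show ?thesis
      by (simp add: Z_def)
  qed
  then have "emeasure \<nu> (\<Union>n. {a<..<s - 1 / (1 + real n)}) = 0"
    by (intro emeasure_UN_eq_0) (auto simp: sets)
  then show null: "emeasure \<nu> {a<..<s} = 0"
    by (simp only: UN_greaterThanLessThan_inverse_Suc)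
  fix \<eta> :: real
  assume "0 < \<eta>"
  show "emeasure \<nu> {s..<s + \<eta>} > 0"
  proof (rule ccontr)
    assume "\<not> emeasure \<nu> {s..<s + \<eta>} > 0"
    then have "emeasure \<nu> {s..<s + \<eta>} = 0"
      by simp
    moreover have "emeasure \<nu> {a<..<s + \<eta>} \<le> emeasure \<nu> ({a<..<s} \<union> {s..<s + \<eta>})"
      by (intro emeasure_mono) (auto simp: sets)
    moreover have "\<dots> \<le> emeasure \<nu> {a<..<s} + emeasure \<nu> {s..<s + \<eta>}"
      by (intro emeasure_subadditive) (auto simp: sets)
    ultimately have "s + \<eta> \<in> Z"
      using null by (simp add: Z_def)
    then have "s + \<eta> \<le> s"
      unfolding s_def using bdd by (rule cSup_upper)
    with \<open>0 < \<eta>\<close> show False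
      by simp
  qed
qed

section \<open>Point masses\<close>

definition add_unit_mass :: "'a measure \<Rightarrow> 'a \<Rightarrow> 'a measure" where
  "add_unit_mass M a = measure_of (space M) (sets M) (\<lambda>A. emeasure M A + indicator A a)"

lemma sets_add_unit_mass[simp]: "sets (add_unit_mass M a) = sets M"
  unfolding add_unit_mass_def by (rule sets.sets_measure_of_eq)

lemma emeasure_add_unit_mass:
  assumes "A \<in> sets M"
  shows "emeasure (add_unit_mass M a) A = emeasure M A + indicator A a"
  unfolding add_unit_mass_def
proof (rule emeasure_measure_of_sigma[OF sets.sigma_algebra_axioms _ _ assms])
  show "positive (sets M) (\<lambda>A. emeasure M A + indicator A a)"
    by (simp add: positive_def)
  show "countably_additive (sets M) (\<lambda>A. emeasure M A + indicator A a)"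
  proof (rule countably_additiveI)
    fix F :: "nat \<Rightarrow> 'a set"
    assume F: "range F \<subseteq> sets M" "disjoint_family F"
    have "(\<Sum>i. emeasure M (F i) + indicator (F i) a) = (\<Sum>i. emeasure M (F i)) + (\<Sum>i. indicator (F i) a)"
      by (rule suminf_add[symmetric]) auto
    also have "\<dots> = emeasure M (\<Union>i. F i) + indicator (\<Union>i. F i) a"
      using F by (simp add: suminf_emeasure suminf_indicator)
    finally show "(\<Sum>i. emeasure M (F i) + indicator (F i) a) = emeasure M (\<Union>i. F i) + indicator (\<Union>i. F i) a" .
  qed
qed

lemma locally_finite_borel_add_unit_mass:
  assumes "locally_finite_borel \<mu>"
  shows "locally_finite_borel (add_unit_mass \<mu> a)"
  using assms unfolding locally_finite_borel_def
  by (auto simp: emeasure_add_unit_mass compact_imp_closed borel_closed indicator_def)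

lemma measure_eqI_countable_support:
  assumes sets: "sets M = sets N" and "countable \<Omega>" and singletons: "\<And>x. x \<in> \<Omega> \<Longrightarrow> {x} \<in> sets M"
    and AE: "AE x in M. x \<in> \<Omega>" "AE x in N. x \<in> \<Omega>"
    and eq: "\<And>x. x \<in> \<Omega> \<Longrightarrow> emeasure M {x} = emeasure N {x}"
  shows "M = N"
proof (rule measure_eqI[OF sets])
  have \<Omega>: "\<Omega> \<in> sets M"
    using singletons sets.countable[OF _ \<open>countable \<Omega>\<close>] by blast
  fix A
  assume A: "A \<in> sets M"
  have "emeasure M A = emeasure M (A \<inter> \<Omega>)"
    using AE(1) A \<Omega> by (intro emeasure_eq_AE) auto
  also have "\<dots> = (\<integral>\<^sup>+x. emeasure M {x} \<partial>count_space (A \<inter> \<Omega>))"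
    using singletons \<open>countable \<Omega>\<close> by (intro emeasure_countable_singleton) auto
  also have "\<dots> = (\<integral>\<^sup>+x. emeasure N {x} \<partial>count_space (A \<inter> \<Omega>))"
    using eq by (intro nn_integral_cong) auto
  also have "\<dots> = emeasure N (A \<inter> \<Omega>)"
    using singletons \<open>countable \<Omega>\<close> sets by (intro emeasure_countable_singleton[symmetric]) auto
  also have "\<dots> = emeasure N A"
    using AE(2) A \<Omega> sets by (intro emeasure_eq_AE) auto
  finally show "emeasure M A = emeasure N A" .
qed

lemma emeasure_nonzero_integer_diracs:
  assumes "A \<in> sets borel"
  shows "emeasure nonzero_integer_diracs A = emeasure (count_space (UNIV - {0})) {k. k \<noteq> 0 \<and> of_int k \<in> A}"
proof -
  have "emeasure nonzero_integer_diracs A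
      = emeasure (count_space (UNIV - {0})) (real_of_int -` A \<inter> space (count_space (UNIV - {0})))"
    unfolding nonzero_integer_diracs_def using assms by (intro emeasure_distr) auto
  also have "real_of_int -` A \<inter> space (count_space (UNIV - {0})) = {k. k \<noteq> 0 \<and> of_int k \<in> A}"
    by auto
  finally show ?thesis .
qed

lemma nonzero_integer_diracs_eqI:
  assumes sets: "sets \<mu> = sets borel"
    and atoms: "\<And>k. emeasure \<mu> {of_int k} = (if k = 0 then 0 else 1)"
    and gaps: "\<And>k. emeasure \<mu> {of_int k<..<of_int k + 1} = 0"
  shows "\<mu> = nonzero_integer_diracs"
proof (rule measure_eqI_countable_support[where \<Omega> = \<int>])
  show "sets \<mu> = sets nonzero_integer_diracs"
    by (simp add: sets nonzero_integer_diracs_def)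
  have "- \<int> \<subseteq> (\<Union>k. {real_of_int k<..<of_int k + 1})"
  proof
    fix x :: real
    assume "x \<in> - \<int>"
    then have "x \<noteq> of_int \<lfloor>x\<rfloor>"
      by (metis ComplD Ints_of_int)
    then have "of_int \<lfloor>x\<rfloor> < x"
      using of_int_floor_le[of x] by linarith
    then show "x \<in> (\<Union>k. {real_of_int k<..<of_int k + 1})"
      by (auto intro!: exI[of _ "\<lfloor>x\<rfloor>"])
  qed
  moreover have "(\<Union>k. {real_of_int k<..<of_int k + 1}) \<in> null_sets \<mu>"
    using gaps by (intro null_sets_UN') (auto simp: sets null_sets_def)
  ultimately show "AE x in \<mu>. x \<in> \<int>"
    by (auto intro: AE_I'[where N = "\<Union>k. {real_of_int k<..<of_int k + 1}"])
  have "emeasure nonzero_integer_diracs (- \<int>) = 0"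
    by (simp add: emeasure_nonzero_integer_diracs)
  then show "AE x in nonzero_integer_diracs. x \<in> \<int>"
    by (intro AE_I'[where N = "- \<int>"]) (auto simp: null_sets_def nonzero_integer_diracs_def)
  fix x :: real
  assume "x \<in> \<int>"
  then obtain k where x: "x = of_int k"
    by (auto elim: Ints_cases)
  have "{j. j \<noteq> 0 \<and> real_of_int j \<in> {of_int k}} = (if k = 0 then {} else {k})"
    by auto
  then show "emeasure \<mu> {x} = emeasure nonzero_integer_diracs {x}"
    by (simp add: x atoms emeasure_nonzero_integer_diracs)
qed (auto simp: sets countable_int)

section \<open>Overlapping translates of a short set\<close>

lemma emeasure_Int_lessThan_le_if_null_overlap:
  fixes B :: "real set" and t :: real
  assumes B[measurable]: "B \<in> sets borel" and "B \<subseteq> {0..}"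
    and null: "{x \<in> B. x + t \<in> B} \<in> null_sets lborel"
  shows "emeasure lborel (B \<inter> {..<2 * t}) \<le> ennreal t"
proof -
  define S where "S = {x. x + t \<in> B \<inter> {t..<2 * t}}"
  have S_sets: "S \<in> sets borel"
    unfolding S_def by measurable
  have "emeasure lborel (B \<inter> {..<2 * t}) \<le> emeasure lborel ((B \<inter> {..<t}) \<union> (B \<inter> {t..<2 * t}))"
    by (intro emeasure_mono) auto
  also have "\<dots> \<le> emeasure lborel (B \<inter> {..<t}) + emeasure lborel (B \<inter> {t..<2 * t})"
    by (intro emeasure_subadditive) simp_all
  also have "emeasure lborel (B \<inter> {t..<2 * t}) = emeasure lborel S"
    unfolding S_def by (rule emeasure_lborel_translate[symmetric]) simp
  also have "emeasure lborel (B \<inter> {..<t}) + emeasure lborel S = emeasure lborel ((B \<inter> {..<t}) \<union> S)"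
  proof -
    have "emeasure lborel ((B \<inter> {..<t}) \<inter> S) \<le> emeasure lborel {x \<in> B. x + t \<in> B}"
      by (intro emeasure_mono) (auto simp: S_def)
    then show ?thesis
      using emeasure_Un_Int[of "B \<inter> {..<t}" lborel S] S_sets null by auto
  qed
  also have "\<dots> \<le> emeasure lborel {0..t}"
    using \<open>B \<subseteq> {0..}\<close> by (intro emeasure_mono) (auto simp: S_def)
  finally show ?thesis
    by (cases "0 \<le> t") (simp_all add: emeasure_lborel_Icc_eq ennreal_neg)
qed

text \<open>If \<open>B\<close> and \<open>B - t\<close> were almost disjoint, then \<open>B \<union> (B - t) \<subseteq> [-t, d]\<close> would force
  \<open>t \<ge> 2 - d > 1/2\<close>, while packing \<open>B \<inter> [0, 2t)\<close> into \<open>[0, t]\<close> gives \<open>1 \<le> t + max 0 (d - 2t)\<close>,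
  i.e. \<open>t \<le> d - 1 < 1/2\<close>.\<close>

lemma emeasure_translate_overlap_pos:
  fixes B :: "real set" and d t :: real
  assumes B[measurable]: "B \<in> sets borel" and "B \<subseteq> {0..d}" and m: "emeasure lborel B = 1"
    and "d < 3/2" and "0 < t" "t < 1"
  shows "emeasure lborel {x \<in> B. x + t \<in> B} > 0"
proof (rule ccontr)
  assume "\<not> emeasure lborel {x \<in> B. x + t \<in> B} > 0"
  then have null: "{x \<in> B. x + t \<in> B} \<in> null_sets lborel"
    by (simp add: null_sets_def)
  have "0 \<le> d"
    using m \<open>B \<subseteq> {0..d}\<close> by (cases "B = {}") auto
  have far: "2 \<le> d + t"
  proof -
    define C where "C = {x. x + t \<in> B}"
    have "ennreal 2 = emeasure lborel B + emeasure lborel C"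
      using m emeasure_lborel_translate[OF B, of t] by (simp add: C_def)
    also have "\<dots> = emeasure lborel (B \<union> C)"
      using null by (intro emeasure_Un'[symmetric]) (auto simp: C_def Int_def)
    also have "\<dots> \<le> emeasure lborel {-t..d}"
      using \<open>B \<subseteq> {0..d}\<close> \<open>0 < t\<close> by (intro emeasure_mono) (force simp: C_def)+
    also have "\<dots> = ennreal (d + t)"
      using \<open>0 \<le> d\<close> \<open>0 < t\<close> by (simp add: emeasure_lborel_Icc_eq)
    finally have "ennreal 2 \<le> ennreal (d + t)" .
    then show ?thesis
      using \<open>0 \<le> d\<close> \<open>0 < t\<close> by (subst (asm) ennreal_le_iff) auto
  qed
  have "B \<subseteq> {0..}"
    using \<open>B \<subseteq> {0..d}\<close> by auto
  have "emeasure lborel B \<le> emeasure lborel ((B \<inter> {..<2 * t}) \<union> {2 * t..d})"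
    using \<open>B \<subseteq> {0..d}\<close> by (intro emeasure_mono) auto
  also have "\<dots> \<le> emeasure lborel (B \<inter> {..<2 * t}) + emeasure lborel {2 * t..d}"
    by (intro emeasure_subadditive) auto
  also have "\<dots> \<le> ennreal t + ennreal (if 2 * t \<le> d then d - 2 * t else 0)"
    using emeasure_Int_lessThan_le_if_null_overlap[OF B \<open>B \<subseteq> {0..}\<close> null]
    by (intro add_mono) (auto simp: emeasure_lborel_Icc_eq)
  finally have near: "1 \<le> t + (if 2 * t \<le> d then d - 2 * t else 0)"
    using m \<open>0 < t\<close> by (simp add: ennreal_plus[symmetric] ennreal_le_iff del: ennreal_plus)
  from far near \<open>d < 3/2\<close> \<open>t < 1\<close> show False
    by (auto split: if_splits)
qed

section \<open>Convolving indicators with measures\<close>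

lemma borel_measurable_emeasure_section:
  fixes Q :: "('a::topological_space \<times> 'b::topological_space) set"
  assumes "sigma_finite_measure \<nu>" and sets: "sets \<nu> = sets borel"
    and Q: "Q \<in> sets (borel \<Otimes>\<^sub>M borel)"
  shows "(\<lambda>x. emeasure \<nu> {y. (x, y) \<in> Q}) \<in> borel_measurable borel"
proof -
  interpret sigma_finite_measure \<nu> by fact
  have "Q \<in> sets (borel \<Otimes>\<^sub>M \<nu>)"
    using Q by (simp add: sets_pair_measure_cong[OF refl sets])
  from measurable_emeasure_Pair[OF this] show ?thesis
    by (simp add: vimage_def)
qed

lemma nn_integral_emeasure_differences:
  fixes A B :: "real set"
  assumes \<nu>: "sigma_finite_measure \<nu>" and sets: "sets \<nu> = sets borel"
    and [measurable]: "A \<in> sets borel" "B \<in> sets borel"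
  shows "(\<integral>\<^sup>+x. emeasure \<nu> {y. x - y \<in> B} * indicator A x \<partial>lborel)
       = (\<integral>\<^sup>+y. emeasure lborel {x \<in> A. x - y \<in> B} \<partial>\<nu>)"
proof -
  interpret \<nu>: sigma_finite_measure \<nu> by fact
  interpret pair_sigma_finite lborel \<nu>
    by (intro pair_sigma_finite.intro sigma_finite_lborel \<nu>)
  define f where "f x y = (indicator A x * indicator B (x - y) :: ennreal)" for x y :: real
  have "(\<lambda>(x, y). f x y) \<in> borel_measurable (borel \<Otimes>\<^sub>M borel)"
    unfolding f_def by measurable
  then have f: "(\<lambda>(x, y). f x y) \<in> borel_measurable (lborel \<Otimes>\<^sub>M \<nu>)"
    by (simp add: measurable_cong_sets[OF sets_pair_measure_cong[OF sets_lborel sets] refl])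
  have "emeasure \<nu> {y. x - y \<in> B} * indicator A x = (\<integral>\<^sup>+y. f x y \<partial>\<nu>)" for x
  proof -
    have "(\<integral>\<^sup>+y. f x y \<partial>\<nu>) = (\<integral>\<^sup>+y. indicator A x * indicator {y. x - y \<in> B} y \<partial>\<nu>)"
      by (simp add: f_def indicator_def)
    also have "\<dots> = indicator A x * emeasure \<nu> {y. x - y \<in> B}"
      by (simp add: sets nn_integral_cmult_indicator)
    finally show ?thesis
      by (simp add: mult.commute)
  qed
  then have "(\<integral>\<^sup>+x. emeasure \<nu> {y. x - y \<in> B} * indicator A x \<partial>lborel)
      = (\<integral>\<^sup>+x. (\<integral>\<^sup>+y. f x y \<partial>\<nu>) \<partial>lborel)"
    by simp
  also have "\<dots> = (\<integral>\<^sup>+y. (\<integral>\<^sup>+x. f x y \<partial>lborel) \<partial>\<nu>)"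
    by (rule Fubini'[OF f, symmetric])
  also have "(\<lambda>y. \<integral>\<^sup>+x. f x y \<partial>lborel) = (\<lambda>y. emeasure lborel {x \<in> A. x - y \<in> B})"
  proof
    fix y
    have "f x y = indicator {x \<in> A. x - y \<in> B} x" for x
      by (simp add: f_def indicator_def)
    then show "(\<integral>\<^sup>+x. f x y \<partial>lborel) = emeasure lborel {x \<in> A. x - y \<in> B}"
      by simp
  qed
  finally show ?thesis .
qed

lemma AE_emeasure_differences_null:
  fixes N :: "real set"
  assumes \<nu>: "sigma_finite_measure \<nu>" and sets: "sets \<nu> = sets borel"
    and N: "N \<in> null_sets lborel"
  shows "AE x in lborel. emeasure \<nu> {y. x - y \<in> N} = 0"
proof -
  have [measurable]: "N \<in> sets borel"
    using N by auto
  have "(\<integral>\<^sup>+x. emeasure \<nu> {y. x - y \<in> N} \<partial>lborel)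
      = (\<integral>\<^sup>+x. emeasure \<nu> {y. x - y \<in> N} * indicator UNIV x \<partial>lborel)"
    by simp
  also have "\<dots> = (\<integral>\<^sup>+y. emeasure lborel {x. x - y \<in> N} \<partial>\<nu>)"
    by (subst nn_integral_emeasure_differences[OF \<nu> sets]) simp_all
  also have "\<dots> = 0"
  proof -
    have "emeasure lborel {x. x - y \<in> N} = 0" for y
      using emeasure_lborel_translate[of N "- y"] null_setsD1[OF N] by simp
    then show ?thesis
      by simp
  qed
  finally have "(\<integral>\<^sup>+x. emeasure \<nu> {y. x - y \<in> N} \<partial>lborel) = 0" .
  moreover have "{(x, y). x - y \<in> N} \<in> sets (borel \<Otimes>\<^sub>M borel)"
  proof -
    have "{(x, y). x - y \<in> N} = {p \<in> space (borel \<Otimes>\<^sub>M borel). fst p - snd p \<in> N}"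
      by (auto simp: space_pair_measure)
    then show ?thesis
      by simp
  qed
  from borel_measurable_emeasure_section[OF \<nu> sets this]
  have "(\<lambda>x. emeasure \<nu> {y. x - y \<in> N}) \<in> borel_measurable lborel"
    by simp
  ultimately show ?thesis
    by (simp add: nn_integral_0_iff_AE)
qed

lemma borel_measurable_emeasure_overlap:
  fixes B :: "real set"
  assumes [measurable]: "B \<in> sets borel"
  shows "(\<lambda>y. emeasure lborel {x. x - c \<in> B \<and> x - y \<in> B}) \<in> borel_measurable borel"
proof -
  have "{(y, x). x - c \<in> B \<and> x - y \<in> B}
      = {p \<in> space (borel \<Otimes>\<^sub>M borel). snd p - c \<in> B \<and> snd p - fst p \<in> B}"
    by (auto simp: space_pair_measure)
  then have "{(y, x). x - c \<in> B \<and> x - y \<in> B} \<in> sets (borel \<Otimes>\<^sub>M borel)"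
    by simp
  from borel_measurable_emeasure_section[OF sigma_finite_lborel sets_lborel this] show ?thesis
    by simp
qed

definition tiles_with :: "real set \<Rightarrow> real measure \<Rightarrow> bool" where
  "tiles_with B \<nu> \<longleftrightarrow> (AE x in lborel. emeasure \<nu> {y. x - y \<in> B} = 1)"

lemma tiles_with_translate:
  fixes c :: real
  assumes \<nu>: "locally_finite_borel \<nu>" and [measurable]: "B \<in> sets borel" and "tiles_with B \<nu>"
  shows "tiles_with B (distr \<nu> borel (\<lambda>y. y - c))"
proof -
  have "AE x in lborel. emeasure \<nu> {y. (x + c) - y \<in> B} = 1"
    using assms(3) unfolding tiles_with_def by (rule AE_lborel_translate)
  moreover have "emeasure (distr \<nu> borel (\<lambda>y. y - c)) {y. x - y \<in> B} = emeasure \<nu> {y. (x + c) - y \<in> B}" for x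
    by (subst emeasure_distr_borel[OF locally_finite_borel_sets[OF \<nu>]])
       (auto simp: vimage_def algebra_simps)
  ultimately show ?thesis
    unfolding tiles_with_def by simp
qed

lemma tiles_with_reflect:
  fixes d :: real
  assumes \<nu>: "locally_finite_borel \<nu>" and [measurable]: "B \<in> sets borel" and "tiles_with B \<nu>"
  shows "tiles_with {x. d - x \<in> B} (distr \<nu> borel uminus)"
proof -
  have "AE x in lborel. emeasure \<nu> {y. (d - x) - y \<in> B} = 1"
    using assms(3) unfolding tiles_with_def by (rule AE_lborel_reflect)
  moreover have "emeasure (distr \<nu> borel uminus) {y. x - y \<in> {x. d - x \<in> B}}
      = emeasure \<nu> {y. (d - x) - y \<in> B}" for x
    by (subst emeasure_distr_borel[OF locally_finite_borel_sets[OF \<nu>]])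
       (auto simp: vimage_def algebra_simps)
  ultimately show ?thesis
    unfolding tiles_with_def by simp
qed

lemma tiles_with_add_unit_mass:
  assumes sets: "sets \<mu> = sets borel" and [measurable]: "B \<in> sets borel"
    and "AE x in lborel. emeasure \<mu> {y. x - y \<in> B} = indicator (- B) x"
  shows "tiles_with B (add_unit_mass \<mu> 0)"
  unfolding tiles_with_def using assms(3)
proof eventually_elim
  case (elim x)
  have "{y. x - y \<in> B} \<in> sets \<mu>"
    unfolding sets by measurable
  with elim show ?case
    by (simp add: emeasure_add_unit_mass indicator_def)
qed

section \<open>Short tiles\<close>

locale short_tile =
  fixes B :: "real set" and d :: real
  assumes borel[measurable]: "B \<in> sets borel"
    and subset: "B \<subseteq> {0..d}"
    and short: "d < 3/2"
    and emeasure_eq_1: "emeasure lborel B = 1"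
    and mass_near_0: "\<And>\<delta>. 0 < \<delta> \<Longrightarrow> emeasure lborel (B \<inter> {..<\<delta>}) > 0"
    and mass_near_d: "\<And>\<delta>. 0 < \<delta> \<Longrightarrow> emeasure lborel (B \<inter> {d - \<delta><..}) > 0"
begin

lemma emeasure_overlap_pos:
  assumes "0 < \<bar>y - c\<bar>" and "\<bar>y - c\<bar> < 1"
  shows "emeasure lborel {x. x - c \<in> B \<and> x - y \<in> B} > 0"
proof -
  have *: "emeasure lborel {x. x - a \<in> B \<and> x - b \<in> B} > 0" if "a < b" "b - a < 1" for a b
  proof -
    have "{x. x - a \<in> B \<and> x - b \<in> B} = {x. x + (- b) \<in> {z \<in> B. z + (b - a) \<in> B}}"
      by auto
    also have "emeasure lborel \<dots> = emeasure lborel {z \<in> B. z + (b - a) \<in> B}"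
      by (intro emeasure_lborel_translate) measurable
    finally show ?thesis
      using emeasure_translate_overlap_pos[OF borel subset emeasure_eq_1 short] that by simp
  qed
  show ?thesis
  proof (cases "c < y")
    case True
    with assms show ?thesis
      using *[of c y] by simp
  next
    case False
    with assms show ?thesis
      using *[of y c] by (simp add: conj_commute)
  qed
qed

lemma short_tile_reflect: "short_tile {x. d - x \<in> B} d"
proof
  show "{x. d - x \<in> B} \<subseteq> {0..d}"
    using subset by force
  show "emeasure lborel {x. d - x \<in> B} = 1"
    by (simp add: emeasure_lborel_reflect emeasure_eq_1)
  fix \<delta> :: real
  assume "0 < \<delta>"
  have "{x. d - x \<in> B} \<inter> {..<\<delta>} = {x. d - x \<in> B \<inter> {d - \<delta><..}}"
    by auto
  also have "emeasure lborel \<dots> = emeasure lborel (B \<inter> {d - \<delta><..})"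
    by (intro emeasure_lborel_reflect) measurable
  finally show "emeasure lborel ({x. d - x \<in> B} \<inter> {..<\<delta>}) > 0"
    using mass_near_d[OF \<open>0 < \<delta>\<close>] by simp
  have "{x. d - x \<in> B} \<inter> {d - \<delta><..} = {x. d - x \<in> B \<inter> {..<\<delta>}}"
    by auto
  also have "emeasure lborel \<dots> = emeasure lborel (B \<inter> {..<\<delta>})"
    by (intro emeasure_lborel_reflect) measurable
  finally show "emeasure lborel ({x. d - x \<in> B} \<inter> {d - \<delta><..}) > 0"
    using mass_near_0[OF \<open>0 < \<delta>\<close>] by simp
qed (use short in auto)

end

locale short_tiling = short_tile +
  fixes \<nu> :: "real measure"
  assumes locally_finite: "locally_finite_borel \<nu>"
    and tiles: "tiles_with B \<nu>"
begin

lemma sets_\<nu>[simp, measurable_cong]: "sets \<nu> = sets borel"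
  by (rule locally_finite_borel_sets[OF locally_finite])

lemma space_\<nu>[simp]: "space \<nu> = UNIV"
  by (rule locally_finite_borel_space[OF locally_finite])

lemma short_tiling_translate: "short_tiling B d (distr \<nu> borel (\<lambda>y. y - c))"
proof -
  have "locally_finite_borel (distr \<nu> borel (\<lambda>y. y - c))"
  proof (rule locally_finite_borel_distr[OF locally_finite])
    fix K :: "real set"
    assume "compact K"
    moreover have "(\<lambda>y. y - c) -` K = (+) c ` K"
      by (auto simp: image_iff) (metis add.commute diff_add_cancel)
    ultimately show "compact ((\<lambda>y. y - c) -` K)"
      by (simp add: compact_translation)
  qed simp
  then show ?thesis
    using tiles_with_translate[OF locally_finite borel tiles]
    by (intro short_tiling.intro short_tiling_axioms.intro short_tile_axioms)
qed

lemma short_tiling_reflect: "short_tiling {x. d - x \<in> B} d (distr \<nu> borel uminus)"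
proof -
  have "locally_finite_borel (distr \<nu> borel uminus)"
  proof (rule locally_finite_borel_distr[OF locally_finite])
    fix K :: "real set"
    assume "compact K"
    moreover have "uminus -` K = uminus ` K"
      by (auto simp: image_iff) (metis minus_minus)
    ultimately show "compact (uminus -` K)"
      by (simp add: compact_negations)
  qed simp
  then show ?thesis
    using tiles_with_reflect[OF locally_finite borel tiles] short_tile_reflect
    by (intro short_tiling.intro short_tiling_axioms.intro)
qed

lemma sigma_finite: "sigma_finite_measure \<nu>"
  by (rule locally_finite_borel_sigma_finite[OF locally_finite])

lemma
  assumes atom: "1 \<le> emeasure \<nu> {c}"
  shows atom_eq_1: "emeasure \<nu> {c} = 1"
    and AE_overlap_eq_0: "AE y in \<nu>. y \<noteq> c \<longrightarrow> emeasure lborel {x. x - c \<in> B \<and> x - y \<in> B} = 0"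
proof -
  define \<psi> where "\<psi> y = emeasure lborel {x. x - c \<in> B \<and> x - y \<in> B}" for y
  have [measurable]: "\<psi> \<in> borel_measurable \<nu>"
    using borel_measurable_emeasure_overlap[OF borel, of c]
    by (simp add: \<psi>_def[abs_def] measurable_cong_sets[OF sets_\<nu> refl])
  have "(\<integral>\<^sup>+y. \<psi> y \<partial>\<nu>) = (\<integral>\<^sup>+x. emeasure \<nu> {y. x - y \<in> B} * indicator {x. x - c \<in> B} x \<partial>lborel)"
    unfolding \<psi>_def by (subst nn_integral_emeasure_differences[OF sigma_finite sets_\<nu>]) simp_all
  also have "\<dots> = (\<integral>\<^sup>+x. indicator {x. x - c \<in> B} x \<partial>lborel)"
    using tiles unfolding tiles_with_def by (intro nn_integral_cong_AE) auto
  also have "\<dots> = 1"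
    using emeasure_lborel_translate[OF borel, of "- c"] by (simp add: emeasure_eq_1)
  finally have total: "(\<integral>\<^sup>+y. \<psi> y \<partial>\<nu>) = 1" .
  have "\<psi> c = 1"
    using emeasure_lborel_translate[OF borel, of "- c"] by (simp add: \<psi>_def emeasure_eq_1)
  define R where "R = (\<integral>\<^sup>+y. \<psi> y * indicator (- {c}) y \<partial>\<nu>)"
  have "(\<integral>\<^sup>+y. \<psi> y \<partial>\<nu>) = (\<integral>\<^sup>+y. \<psi> y * indicator {c} y + \<psi> y * indicator (- {c}) y \<partial>\<nu>)"
    by (intro nn_integral_cong) (simp add: indicator_def)
  also have "\<dots> = (\<integral>\<^sup>+y. \<psi> y * indicator {c} y \<partial>\<nu>) + R"
    unfolding R_def by (intro nn_integral_add) measurable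
  also have "(\<integral>\<^sup>+y. \<psi> y * indicator {c} y \<partial>\<nu>) = emeasure \<nu> {c}"
    using \<open>\<psi> c = 1\<close> by (simp add: nn_integral_indicator_singleton)
  finally have split: "1 = emeasure \<nu> {c} + R"
    using total by simp
  then show "emeasure \<nu> {c} = 1"
    using atom by (metis antisym le_iff_add)
  with split have "1 + R = 1 + 0"
    by simp
  then have "R = 0"
    by (simp add: ennreal_add_left_cancel)
  then have "AE y in \<nu>. \<psi> y * indicator (- {c}) y = 0"
    unfolding R_def by (subst (asm) nn_integral_0_iff_AE) measurable
  then show "AE y in \<nu>. y \<noteq> c \<longrightarrow> emeasure lborel {x. x - c \<in> B \<and> x - y \<in> B} = 0"
    by eventually_elim (auto simp: \<psi>_def)
qed

lemma emeasure_punctured_nbhd_atom: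
  assumes "1 \<le> emeasure \<nu> {c}"
  shows "emeasure \<nu> ({c - 1<..<c + 1} - {c}) = 0"
proof -
  have "AE y in \<nu>. y \<notin> {c - 1<..<c + 1} - {c}"
    using AE_overlap_eq_0[OF assms]
  proof eventually_elim
    case (elim y)
    show ?case
    proof
      assume "y \<in> {c - 1<..<c + 1} - {c}"
      then have "0 < \<bar>y - c\<bar>" "\<bar>y - c\<bar> < 1"
        by auto
      with emeasure_overlap_pos elim show False
        by fastforce
    qed
  qed
  then have "emeasure \<nu> {y \<in> space \<nu>. y \<in> {c - 1<..<c + 1} - {c}} = 0"
    by (rule emeasure_eq_0_AE)
  moreover have "{y \<in> space \<nu>. y \<in> {c - 1<..<c + 1} - {c}} = {c - 1<..<c + 1} - {c}"
    by auto
  ultimately show ?thesis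
    by (simp only:)
qed

lemma one_le_emeasure_if_covers:
  assumes P: "P \<in> sets borel" "emeasure lborel P > 0"
    and S: "S \<in> sets borel" and N: "N \<in> null_sets \<nu>"
    and covers: "\<And>x y. x \<in> P \<Longrightarrow> x - y \<in> B \<Longrightarrow> y \<in> S \<union> N"
  shows "1 \<le> emeasure \<nu> S"
proof -
  obtain x where "x \<in> P" and x: "emeasure \<nu> {y. x - y \<in> B} = 1"
    using AE_lborel_bexI[OF tiles[unfolded tiles_with_def] P] by blast
  have "emeasure \<nu> {y. x - y \<in> B} \<le> emeasure \<nu> (S \<union> N)"
    using covers[OF \<open>x \<in> P\<close>] N S by (intro emeasure_mono) auto
  also have "\<dots> = emeasure \<nu> S"
    using N S by (intro emeasure_Un_null_set) auto
  finally show ?thesis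
    using x by simp
qed

lemma vanishing_interval_le:
  assumes "emeasure \<nu> {0<..<u} = 0"
  shows "u \<le> d"
proof (rule ccontr)
  assume "\<not> u \<le> d"
  have "1 \<le> emeasure \<nu> {}"
  proof (rule one_le_emeasure_if_covers[of "{d<..<u}" "{}" "{0<..<u}"])
    show "emeasure lborel {d<..<u} > 0"
      using \<open>\<not> u \<le> d\<close> by simp
    show "{0<..<u} \<in> null_sets \<nu>"
      using assms by (simp add: null_sets_def)
    fix x y
    assume "x \<in> {d<..<u}" and "x - y \<in> B"
    then show "y \<in> {} \<union> {0<..<u}"
      using subset by auto
  qed simp_all
  then show False
    by simp
qed

text \<open>For \<open>y \<in> [s, s + \<eta>)\<close> the part of \<open>B + y\<close> left of \<open>s + \<eta>\<close> has positive measure (mass of \<open>B\<close>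
  near \<open>0\<close>) and lies almost entirely in \<open>B\<close>, so \<open>B + y\<close> overlaps \<open>B\<close>.\<close>

lemma interval_null_if_ae_in_tile:
  assumes "1 \<le> emeasure \<nu> {0}" and "0 < s" and "emeasure lborel ({s..<s + \<eta>} - B) = 0"
  shows "emeasure \<nu> {s..<s + \<eta>} = 0"
proof -
  have "AE y in \<nu>. y \<notin> {s..<s + \<eta>}"
    using AE_overlap_eq_0[OF assms(1)]
  proof eventually_elim
    case (elim y)
    show ?case
    proof
      assume y: "y \<in> {s..<s + \<eta>}"
      have "{x. x + (- y) \<in> B \<inter> {..<s + \<eta> - y}} \<subseteq> {x. x \<in> B \<and> x - y \<in> B} \<union> ({s..<s + \<eta>} - B)"
        using y subset by force
      then have "emeasure lborel {x. x + (- y) \<in> B \<inter> {..<s + \<eta> - y}}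
          \<le> emeasure lborel {x. x \<in> B \<and> x - y \<in> B} + emeasure lborel ({s..<s + \<eta>} - B)"
        by (intro order_trans[OF emeasure_mono emeasure_subadditive]) auto
      moreover have "emeasure lborel {x. x + (- y) \<in> B \<inter> {..<s + \<eta> - y}} > 0"
        using mass_near_0[of "s + \<eta> - y"] y by (subst emeasure_lborel_translate) auto
      ultimately show False
        using elim y \<open>0 < s\<close> assms(3) by auto
    qed
  qed
  then have "emeasure \<nu> {y \<in> space \<nu>. y \<in> {s..<s + \<eta>}} = 0"
    by (rule emeasure_eq_0_AE)
  moreover have "{y \<in> space \<nu>. y \<in> {s..<s + \<eta>}} = {s..<s + \<eta>}"
    by auto
  ultimately show ?thesis
    by (simp only:)
qed

lemma atom_at_support_start:
  assumes atom: "1 \<le> emeasure \<nu> {0}" and "1 \<le> s" and gap: "emeasure \<nu> {0<..<s} = 0"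
    and support: "\<And>\<eta>. 0 < \<eta> \<Longrightarrow> emeasure \<nu> {s..<s + \<eta>} > 0"
  shows "1 \<le> emeasure \<nu> {s}"
proof (cases "\<exists>\<eta>>0. emeasure lborel ({s..<s + \<eta>} - B) = 0")
  case True
  then obtain \<eta> where "0 < \<eta>" and "emeasure lborel ({s..<s + \<eta>} - B) = 0"
    by blast
  with interval_null_if_ae_in_tile[OF atom] support \<open>1 \<le> s\<close> show ?thesis
    by fastforce
next
  case False
  have null: "({-1<..<1} - {0}) \<union> {0<..<s} \<in> null_sets \<nu>"
    using emeasure_punctured_nbhd_atom[OF atom] gap by (intro null_sets.Un null_setsI) auto
  show ?thesis
  proof (rule le_emeasure_singleton[OF locally_finite])
    fix n
    let ?\<delta> = "1 / (1 + real n)"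
    show "1 \<le> emeasure \<nu> {s..s + ?\<delta>}"
    proof (rule one_le_emeasure_if_covers[OF _ _ _ null])
      have "0 < ?\<delta>"
        by simp
      with False show "emeasure lborel ({s..<s + ?\<delta>} - B) > 0"
        by (auto simp: zero_less_iff_neq_zero)
      fix x y
      assume "x \<in> {s..<s + ?\<delta>} - B" and "x - y \<in> B"
      then show "y \<in> {s..s + ?\<delta>} \<union> (({-1<..<1} - {0}) \<union> {0<..<s})"
        using subset short \<open>1 \<le> s\<close> by (cases "s \<le> y") auto
    qed simp_all
  qed
qed

text \<open>A point \<open>x\<close> outside \<open>B \<union> (B + s)\<close> has \<open>x - B\<close> inside \<open>(-1, s + 1)\<close> but avoiding the atoms \<open>0\<close>
  and \<open>s\<close>, where \<open>\<nu>\<close> has no other mass.\<close>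

lemma two_translates_cover:
  assumes atom: "1 \<le> emeasure \<nu> {0}" and "1 \<le> s" and gap: "emeasure \<nu> {0<..<s} = 0"
    and atom_s: "1 \<le> emeasure \<nu> {s}"
  shows "emeasure lborel ({d - 1<..<s + 1} - (B \<union> {x. x - s \<in> B})) = 0"
proof (rule ccontr)
  let ?W = "{d - 1<..<s + 1} - (B \<union> {x. x - s \<in> B})"
  let ?N = "(({-1<..<1} - {0}) \<union> {0<..<s}) \<union> ({s - 1<..<s + 1} - {s})"
  assume "emeasure lborel ?W \<noteq> 0"
  have "1 \<le> emeasure \<nu> {}"
  proof (rule one_le_emeasure_if_covers[of ?W "{}" ?N])
    show "emeasure lborel ?W > 0"
      using \<open>emeasure lborel ?W \<noteq> 0\<close> by (simp add: zero_less_iff_neq_zero)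
    show "?N \<in> null_sets \<nu>"
      using emeasure_punctured_nbhd_atom[OF atom] emeasure_punctured_nbhd_atom[OF atom_s] gap
      by (intro null_sets.Un null_setsI) auto
    fix x y
    assume "x \<in> ?W" and "x - y \<in> B"
    then show "y \<in> {} \<union> ?N"
      using subset \<open>1 \<le> s\<close> by auto
  qed simp_all
  then show False
    by simp
qed

lemma support_start_le_1:
  assumes "1 \<le> emeasure \<nu> {0}" and "1 \<le> s" and "emeasure \<nu> {0<..<s} = 0"
    and "1 \<le> emeasure \<nu> {s}"
  shows "s \<le> 1"
proof -
  define W where "W = {d - 1<..<s + 1} - (B \<union> {x. x - s \<in> B})"
  have [measurable]: "W \<in> sets borel"
    unfolding W_def by measurable
  have "ennreal (s + 2 - d) = emeasure lborel {d - 1<..<s + 1}"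
    using \<open>1 \<le> s\<close> short by simp
  also have "\<dots> \<le> emeasure lborel ((B \<inter> {d - 1<..}) \<union> {x. x + (- s) \<in> B \<inter> {..<1}} \<union> W)"
    by (intro emeasure_mono) (auto simp: W_def)
  also have "\<dots> \<le> emeasure lborel (B \<inter> {d - 1<..}) + emeasure lborel {x. x + (- s) \<in> B \<inter> {..<1}} + emeasure lborel W"
    by (intro order_trans[OF emeasure_subadditive] add_right_mono emeasure_subadditive) auto
  also have "\<dots> = emeasure lborel (B \<inter> {d - 1<..}) + emeasure lborel (B \<inter> {..<1})"
  proof -
    have "emeasure lborel {x. x + (- s) \<in> B \<inter> {..<1}} = emeasure lborel (B \<inter> {..<1})"
      by (intro emeasure_lborel_translate) measurable
    with two_translates_cover[OF assms] show ?thesis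
      by (simp add: W_def)
  qed
  also have "\<dots> = emeasure lborel B + emeasure lborel (B \<inter> {d - 1<..<1})"
  proof -
    have "(B \<inter> {d - 1<..}) \<union> (B \<inter> {..<1}) = B" and "(B \<inter> {d - 1<..}) \<inter> (B \<inter> {..<1}) = B \<inter> {d - 1<..<1}"
      using short by auto
    then show ?thesis
      using emeasure_Un_Int[of "B \<inter> {d - 1<..}" lborel "B \<inter> {..<1}"] by simp
  qed
  also have "\<dots> \<le> 1 + emeasure lborel {d - 1<..<1}"
    by (intro add_mono emeasure_mono) (auto simp: emeasure_eq_1)
  also have "\<dots> = ennreal (1 + (2 - d))"
    using short by (subst ennreal_plus) auto
  finally show ?thesis
    using short by (subst (asm) ennreal_le_iff) auto
qed

lemma next_atom:
  assumes atom: "1 \<le> emeasure \<nu> {0}"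
  shows "emeasure \<nu> {1} = 1" and "emeasure \<nu> {0<..<1} = 0"
proof -
  have "emeasure \<nu> {0<..<1} \<le> emeasure \<nu> ({0 - 1<..<0 + 1} - {0})"
    by (intro emeasure_mono) auto
  then show gap: "emeasure \<nu> {0<..<1} = 0"
    using emeasure_punctured_nbhd_atom[OF atom] by simp
  obtain s where "1 \<le> s" and "emeasure \<nu> {0<..<s} = 0"
    and "\<And>\<eta>. 0 < \<eta> \<Longrightarrow> emeasure \<nu> {s..<s + \<eta>} > 0"
    using obtain_support_start[OF sets_\<nu> gap vanishing_interval_le] by blast
  moreover from this have "1 \<le> emeasure \<nu> {s}"
    by (intro atom_at_support_start[OF atom])
  ultimately have "s = 1" and "1 \<le> emeasure \<nu> {s}"
    using support_start_le_1[OF atom] by force+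
  then show "emeasure \<nu> {1} = 1"
    using atom_eq_1 by blast
qed

lemma next_atom_translate:
  assumes "1 \<le> emeasure \<nu> {c}"
  shows "emeasure \<nu> {c + 1} = 1" and "emeasure \<nu> {c<..<c + 1} = 0"
proof -
  let ?\<nu> = "distr \<nu> borel (\<lambda>y. y - c)"
  interpret shifted: short_tiling B d ?\<nu>
    by (rule short_tiling_translate)
  have shift: "emeasure ?\<nu> A = emeasure \<nu> ((\<lambda>y. y - c) -` A)" if "A \<in> sets borel" for A
    using that by (simp add: emeasure_distr_borel)
  have vimages: "(\<lambda>y. y - c) -` {0} = {c}" "(\<lambda>y. y - c) -` {1} = {c + 1}"
    "(\<lambda>y. y - c) -` {0<..<1} = {c<..<c + 1}"
    by auto
  have "1 \<le> emeasure ?\<nu> {0}"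
    using assms by (simp add: shift vimages)
  from shifted.next_atom[OF this] show "emeasure \<nu> {c + 1} = 1" and "emeasure \<nu> {c<..<c + 1} = 0"
    by (simp_all add: shift vimages)
qed

lemma natural_atoms:
  assumes "1 \<le> emeasure \<nu> {0}"
  shows "emeasure \<nu> {real n} = 1" and "emeasure \<nu> {real n<..<real n + 1} = 0"
proof -
  have "1 \<le> emeasure \<nu> {real n}" for n
  proof (induction n)
    case (Suc n)
    then show ?case
      using next_atom_translate(1)[OF Suc.IH] by (simp add: add.commute)
  qed (use assms in simp)
  then show "emeasure \<nu> {real n} = 1" and "emeasure \<nu> {real n<..<real n + 1} = 0"
    using atom_eq_1 next_atom_translate(2) by blast+
qed

lemma integer_atoms:
  assumes "1 \<le> emeasure \<nu> {0}"
  shows "emeasure \<nu> {of_int k} = 1" and "emeasure \<nu> {of_int k<..<of_int k + 1} = 0"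
proof (atomize (full), cases "0 \<le> k")
  case True
  then obtain n where "k = int n"
    by (metis nonneg_eq_int)
  then show "emeasure \<nu> {of_int k} = 1 \<and> emeasure \<nu> {of_int k<..<of_int k + 1} = 0"
    using natural_atoms[OF assms] by simp
next
  case False
  define n where "n = nat (- k - 1)"
  have k: "k = - int n - 1"
    using False by (simp add: n_def)
  let ?\<nu> = "distr \<nu> borel uminus"
  interpret reflected: short_tiling "{x. d - x \<in> B}" d ?\<nu>
    by (rule short_tiling_reflect)
  have reflect: "emeasure ?\<nu> A = emeasure \<nu> (uminus -` A)" if "A \<in> sets borel" for A
    using that by (simp add: emeasure_distr_borel)
  have vimages: "uminus -` {0} = {0::real}" "uminus -` {1 + real n} = {of_int k}"
    "uminus -` {real n<..<real n + 1} = {of_int k<..<of_int k + 1}"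
    using k by auto
  have "1 \<le> emeasure ?\<nu> {0}"
    using assms by (simp add: reflect vimages)
  from reflected.natural_atoms[OF this, of "Suc n"] reflected.natural_atoms[OF this, of n]
  show "emeasure \<nu> {of_int k} = 1 \<and> emeasure \<nu> {of_int k<..<of_int k + 1} = 0"
    by (simp add: reflect vimages)
qed

end

context short_tile
begin

lemma eq_nonzero_integer_diracs_if_tiles_complement:
  assumes \<mu>: "locally_finite_borel \<mu>"
    and tiling: "AE x in lborel. emeasure \<mu> {y. x - y \<in> B} = indicator (- B) x"
  shows "\<mu> = nonzero_integer_diracs"
proof -
  have sets: "sets \<mu> = sets borel"
    by (rule locally_finite_borel_sets[OF \<mu>])
  interpret \<nu>: short_tiling B d "add_unit_mass \<mu> 0"
    using locally_finite_borel_add_unit_mass[OF \<mu>] tiles_with_add_unit_mass[OF sets borel tiling]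
    by (intro short_tiling.intro short_tiling_axioms.intro short_tile_axioms)
  have \<nu>: "emeasure (add_unit_mass \<mu> 0) A = emeasure \<mu> A + indicator A 0" if "A \<in> sets borel" for A
    using that sets by (simp add: emeasure_add_unit_mass)
  then have "1 \<le> emeasure (add_unit_mass \<mu> 0) {0}"
    by simp
  note atoms = \<nu>.integer_atoms[OF this]
  show ?thesis
  proof (rule nonzero_integer_diracs_eqI[OF sets])
    fix k :: int
    show "emeasure \<mu> {of_int k<..<of_int k + 1} = 0"
      using atoms(2)[of k] \<nu>[of "{of_int k<..<of_int k + 1}"] by (simp add: indicator_def)
    have "emeasure \<mu> {of_int k} + indicator {real_of_int k} 0 = 1"
      using atoms(1)[of k] \<nu>[of "{of_int k}"] by simp
    then show "emeasure \<mu> {of_int k} = (if k = 0 then 0 else 1)"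
      by (cases "k = 0") (simp_all add: ennreal_add_left_cancel[of 1 _ 0, simplified] add.commute)
  qed
qed

end

section \<open>Reduction to a Borel tile\<close>

lemma not_null_Int_lessThan_ess_inf:
  assumes "E \<notin> null_sets lebesgue" and "bdd_above E" and "0 < \<delta>"
  shows "E \<inter> {..<ess_inf_set E + \<delta>} \<notin> null_sets lebesgue"
proof
  assume null: "E \<inter> {..<ess_inf_set E + \<delta>} \<in> null_sets lebesgue"
  obtain b where b: "\<And>x. x \<in> E \<Longrightarrow> x \<le> b"
    using \<open>bdd_above E\<close> by (auto simp: bdd_above_def)
  have "bdd_above {t. E \<inter> {..<t} \<in> null_sets lebesgue}"
  proof (rule bdd_aboveI)
    fix t
    assume "t \<in> {t. E \<inter> {..<t} \<in> null_sets lebesgue}"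
    show "t \<le> b"
    proof (rule ccontr)
      assume "\<not> t \<le> b"
      then have "E \<inter> {..<t} = E"
        using b by force
      with \<open>t \<in> _\<close> assms(1) show False
        by simp
    qed
  qed
  with null have "ess_inf_set E + \<delta> \<le> ess_inf_set E"
    unfolding ess_inf_set_def by (intro cSup_upper) auto
  with \<open>0 < \<delta>\<close> show False
    by simp
qed

lemma not_null_Int_greaterThan_ess_sup:
  assumes "E \<notin> null_sets lebesgue" and "bdd_below E" and "0 < \<delta>"
  shows "E \<inter> {ess_sup_set E - \<delta><..} \<notin> null_sets lebesgue"
proof
  assume null: "E \<inter> {ess_sup_set E - \<delta><..} \<in> null_sets lebesgue"
  obtain a where a: "\<And>x. x \<in> E \<Longrightarrow> a \<le> x"
    using \<open>bdd_below E\<close> by (auto simp: bdd_below_def)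
  have "bdd_below {t. E \<inter> {t<..} \<in> null_sets lebesgue}"
  proof (rule bdd_belowI)
    fix t
    assume "t \<in> {t. E \<inter> {t<..} \<in> null_sets lebesgue}"
    show "a \<le> t"
    proof (rule ccontr)
      assume "\<not> a \<le> t"
      then have "E \<inter> {t<..} = E"
        using a by force
      with \<open>t \<in> _\<close> assms(1) show False
        by simp
    qed
  qed
  with null have "ess_sup_set E \<le> ess_sup_set E - \<delta>"
    unfolding ess_sup_set_def by (intro cInf_lower) auto
  with \<open>0 < \<delta>\<close> show False
    by simp
qed

lemma emeasure_lborel_pos_if_not_null:
  assumes "E \<subseteq> S \<union> N" and "N \<in> null_sets lborel" and "S \<in> sets borel" and "I \<in> sets borel"
    and "E \<inter> I \<notin> null_sets lebesgue"
  shows "emeasure lborel (S \<inter> I) > 0"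
proof (rule ccontr)
  assume "\<not> emeasure lborel (S \<inter> I) > 0"
  then have "(S \<inter> I) \<union> N \<in> null_sets lborel"
    using assms(2-4) by (intro null_sets.Un null_setsI) auto
  then have "E \<inter> I \<in> null_sets lebesgue"
    using assms(1) by (intro null_sets_completion_subset[OF _ null_sets_completionI]) auto
  with assms(5) show False
    by simp
qed

lemma short_tile_normalize:
  assumes [measurable]: "S \<in> sets borel" and "S \<subseteq> {a..b}" and "b - a < 3/2"
    and "emeasure lborel S = 1"
    and near_a: "\<And>\<delta>. 0 < \<delta> \<Longrightarrow> emeasure lborel (S \<inter> {..<a + \<delta>}) > 0"
    and near_b: "\<And>\<delta>. 0 < \<delta> \<Longrightarrow> emeasure lborel (S \<inter> {b - \<delta><..}) > 0"
  shows "short_tile {x. x + a \<in> S} (b - a)"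
proof
  show "{x. x + a \<in> S} \<subseteq> {0..b - a}"
    using assms(2) by force
  show "emeasure lborel {x. x + a \<in> S} = 1"
    by (simp add: emeasure_lborel_translate assms(4))
  fix \<delta> :: real
  assume "0 < \<delta>"
  have "{x. x + a \<in> S} \<inter> {..<\<delta>} = {x. x + a \<in> S \<inter> {..<a + \<delta>}}"
    by auto
  also have "emeasure lborel \<dots> = emeasure lborel (S \<inter> {..<a + \<delta>})"
    by (intro emeasure_lborel_translate) measurable
  finally show "emeasure lborel ({x. x + a \<in> S} \<inter> {..<\<delta>}) > 0"
    using near_a[OF \<open>0 < \<delta>\<close>] by simp
  have "{x. x + a \<in> S} \<inter> {b - a - \<delta><..} = {x. x + a \<in> S \<inter> {b - \<delta><..}}"
    by auto
  also have "emeasure lborel \<dots> = emeasure lborel (S \<inter> {b - \<delta><..})"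
    by (intro emeasure_lborel_translate) measurable
  finally show "emeasure lborel ({x. x + a \<in> S} \<inter> {b - a - \<delta><..}) > 0"
    using near_b[OF \<open>0 < \<delta>\<close>] by simp
qed (use assms(3) in auto)

lemma weakly_tiles_complement_AE_borel:
  assumes \<mu>: "locally_finite_borel \<mu>" and tiling: "weakly_tiles_complement E \<mu>"
    and "S \<subseteq> E" and "E \<subseteq> S \<union> N" and N: "N \<in> null_sets lborel" and [measurable]: "S \<in> sets borel"
  shows "AE x in lborel. emeasure \<mu> {y. x - y \<in> S} = indicator (- S) x"
proof -
  have sets: "sets \<mu> = sets borel"
    by (rule locally_finite_borel_sets[OF \<mu>])
  have [measurable]: "N \<in> sets borel"
    using N by auto
  have "AE x in lborel. conv_ind E \<mu> x = indicator (- E) x"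
    using tiling by (simp add: weakly_tiles_complement_def AE_completion_iff Compl_eq_Diff_UNIV)
  moreover note AE_emeasure_differences_null[OF locally_finite_borel_sigma_finite[OF \<mu>] sets N]
  moreover note AE_not_in[OF N]
  ultimately show ?thesis
  proof eventually_elim
    case (elim x)
    have [simp]: "{y. x - y \<in> S} \<in> sets \<mu>"
      unfolding sets by measurable
    have [simp]: "{y. x - y \<in> N} \<in> sets \<mu>"
      unfolding sets by measurable
    have "emeasure \<mu> {y. x - y \<in> S} = (\<integral>\<^sup>+y. indicator {y. x - y \<in> S} y \<partial>\<mu>)"
      by simp
    also have "\<dots> \<le> conv_ind E \<mu> x"
      unfolding conv_ind_def nn_integral_completion
      using \<open>S \<subseteq> E\<close> by (intro nn_integral_mono) (auto simp: indicator_def)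
    finally have lower: "emeasure \<mu> {y. x - y \<in> S} \<le> conv_ind E \<mu> x" .
    have "conv_ind E \<mu> x \<le> (\<integral>\<^sup>+y. indicator {y. x - y \<in> S} y + indicator {y. x - y \<in> N} y \<partial>\<mu>)"
      unfolding conv_ind_def nn_integral_completion
      using \<open>E \<subseteq> S \<union> N\<close> by (intro nn_integral_mono) (auto simp: indicator_def)
    also have "\<dots> = emeasure \<mu> {y. x - y \<in> S} + emeasure \<mu> {y. x - y \<in> N}"
      by (subst nn_integral_add) (simp_all add: borel_measurable_indicator)
    finally have "conv_ind E \<mu> x = emeasure \<mu> {y. x - y \<in> S}"
      using lower elim by (auto intro: antisym)
    moreover have "indicator (- E) x = (indicator (- S) x :: ennreal)"
      using elim \<open>S \<subseteq> E\<close> \<open>E \<subseteq> S \<union> N\<close> by (auto simp: indicator_def)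
    ultimately show ?case
      using elim by simp
  qed
qed

lemma emeasure_lebesgue_eq_lborel:
  assumes "S \<subseteq> E" and "E \<subseteq> S \<union> N" and N: "N \<in> null_sets lborel"
    and S: "S \<in> sets borel" and E: "E \<in> sets lebesgue"
  shows "emeasure lebesgue E = emeasure lborel S"
proof (rule antisym)
  have "emeasure lebesgue E \<le> emeasure lebesgue (S \<union> N)"
    using assms by (intro emeasure_mono) auto
  also have "\<dots> = emeasure lborel (S \<union> N)"
    using N S by (subst emeasure_completion) auto
  also have "\<dots> = emeasure lborel S"
    using N S by (intro emeasure_Un_null_set) auto
  finally show "emeasure lebesgue E \<le> emeasure lborel S" .
  show "emeasure lborel S \<le> emeasure lebesgue E"
    using emeasure_mono[OF \<open>S \<subseteq> E\<close> E] S by simp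
qed

lemma obtain_short_tile:
  assumes "E \<subseteq> {l..u}" and "u - l < 3/2"
    and E: "E \<in> sets lebesgue" and "emeasure lebesgue E = 1"
    and "Sup E = ess_sup_set E" and "Inf E = ess_inf_set E"
    and \<mu>: "locally_finite_borel \<mu>" and "weakly_tiles_complement E \<mu>"
  obtains B d where "short_tile B d" and "AE x in lborel. emeasure \<mu> {y. x - y \<in> B} = indicator (- B) x"
proof -
  obtain S N where "S \<subseteq> E" and "E \<subseteq> S \<union> N" and N: "N \<in> null_sets lborel" and [measurable]: "S \<in> sets borel"
    using sets_completionE[OF E] by (metis Un_mono sets_lborel subset_refl sup.cobounded1)
  have "E \<notin> null_sets lebesgue"
    using assms(4) by auto
  then have "E \<noteq> {}"
    by auto
  have "bdd_above E" and "bdd_below E"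
    using assms(1) by (auto intro!: bdd_aboveI[of _ u] bdd_belowI[of _ l])
  define a where "a = Inf E"
  define b where "b = Sup E"
  have "b - a < 3/2"
    using assms(1,2) cSup_least[OF \<open>E \<noteq> {}\<close>, of u] cInf_greatest[OF \<open>E \<noteq> {}\<close>, of l]
    by (force simp: a_def b_def)
  have "S \<subseteq> {a..b}"
  proof
    fix x
    assume "x \<in> S"
    with \<open>S \<subseteq> E\<close> have "x \<in> E"
      by blast
    with \<open>bdd_above E\<close> \<open>bdd_below E\<close> show "x \<in> {a..b}"
      by (simp add: a_def b_def cInf_lower cSup_upper)
  qed
  have "short_tile {x. x + a \<in> S} (b - a)"
  proof (rule short_tile_normalize)
    show "emeasure lborel S = 1"
      using emeasure_lebesgue_eq_lborel[OF \<open>S \<subseteq> E\<close> \<open>E \<subseteq> S \<union> N\<close> N _ E] assms(4) by simp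
    fix \<delta> :: real
    assume "0 < \<delta>"
    show "emeasure lborel (S \<inter> {..<a + \<delta>}) > 0"
      using not_null_Int_lessThan_ess_inf[OF \<open>E \<notin> _\<close> \<open>bdd_above E\<close> \<open>0 < \<delta>\<close>] assms(6) \<open>E \<subseteq> S \<union> N\<close> N
      by (intro emeasure_lborel_pos_if_not_null) (auto simp: a_def)
    show "emeasure lborel (S \<inter> {b - \<delta><..}) > 0"
      using not_null_Int_greaterThan_ess_sup[OF \<open>E \<notin> _\<close> \<open>bdd_below E\<close> \<open>0 < \<delta>\<close>] assms(5) \<open>E \<subseteq> S \<union> N\<close> N
      by (intro emeasure_lborel_pos_if_not_null) (auto simp: b_def)
  qed (use \<open>S \<subseteq> {a..b}\<close> \<open>b - a < 3/2\<close> in auto)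
  moreover have "AE x in lborel. emeasure \<mu> {y. x - y \<in> {x. x + a \<in> S}} = indicator (- {x. x + a \<in> S}) x"
    using AE_lborel_translate[OF weakly_tiles_complement_AE_borel[OF \<mu> assms(8) \<open>S \<subseteq> E\<close> \<open>E \<subseteq> S \<union> N\<close> N], of a]
    by (simp add: algebra_simps indicator_def)
  ultimately show thesis
    by (rule that)
qed

theorem proposition3p1:
  fixes \<epsilon> L :: real and E :: "real set" and \<mu> :: "real measure"
  assumes "\<epsilon> > 0"
    and "L = 3/2 - \<epsilon>"
    and "E \<subseteq> {0..L}"
    and "E \<in> sets lebesgue"
    and "emeasure lebesgue E = 1"
    and "Sup E = ess_sup_set E"
    and "Inf E = ess_inf_set E"
    and "locally_finite_borel \<mu>"
    and "weakly_tiles_complement E \<mu>"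
  shows "\<mu> = nonzero_integer_diracs"
proof -
  have "L - 0 < 3/2"
    using assms(1,2) by simp
  then obtain B d where "short_tile B d"
    and "AE x in lborel. emeasure \<mu> {y. x - y \<in> B} = indicator (- B) x"
    using obtain_short_tile[OF assms(3) _ assms(4-9)] by blast
  then show ?thesis
    using short_tile.eq_nonzero_integer_diracs_if_tiles_complement assms(8) by blast
qed

end
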